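(* Let $t>0$, $a=(a_1,a_2,a_3):=(0,t,1/t)$, and let $\beta=\beta(t)\in(0,1)$ be defined by $\frac{t+i}{t-i}=e^{2\pi i\beta}$. Let $\mu$ be a real number and suppose there is a constant $C>0$ such that $$\left|\beta-\frac{n}{m}\right|\geq\frac{C}{m^\mu}\quad\text{for all } n,m\in\mathbb Z,\ m\ne0.$$ Then there is a constant $D>0$ such that $$\left|\det M_{m,2,a}\right|\geq\frac{D}{m^{2\mu-2}}\quad\text{for all integers } m\ge1.$$
   Context: For real $s$, $A(s):=\frac{s+i}{s-i}$, and $A_j:=A(a_j)$. For $m\ge0$, $M_{m,2,a}$ is the $4\times4$ matrix with rows $(1,1,1,1)$ and $(1,A_j,A_j^{m+3},A_j^{m+4})$ for $j=1,2,3$. *)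

theory Defs
  imports "HOL-Analysis.Analysis"
begin

definition Aop :: "real \<Rightarrow> complex" where
  "Aop s = (complex_of_real s + \<i>) / (complex_of_real s - \<i>)"

definition rowM :: "nat \<Rightarrow> real \<Rightarrow> complex ^ 4" where
  "rowM m s = vector [1, Aop s, Aop s ^ (m + 3), Aop s ^ (m + 4)]"

definition M2 :: "nat \<Rightarrow> real \<Rightarrow> real \<Rightarrow> real \<Rightarrow> complex ^ 4 ^ 4" where
  "M2 m a1 a2 a3 = vector [vector [1, 1, 1, 1], rowM m a1, rowM m a2, rowM m a3]"

end

theory Submission
  imports Defs
begin

text \<open>With \<open>z = exp (i\<pi>\<beta>)\<close> we have \<open>A(0) = -1\<close>, \<open>A(t) = z^2\<close> and \<open>A(1/t) = -z^-2\<close>.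
  Expanding, the determinant factorises according to the parity of \<open>m\<close>: it is
  \<open>4 (z^(m+4) - z^-(m+4)) (z^(m+2) - z^-(m+2))\<close> for even \<open>m\<close> and
  \<open>-2 (z^2 + z^-2) (z^(m+3) - z^-(m+3))^2\<close> for odd \<open>m\<close>.
  Since \<open>|z^k - z^-k| = 2 |sin (\<pi>k\<beta>)|\<close> is at least the distance from \<open>k\<beta>\<close> to the nearest
  integer, the Diophantine hypothesis bounds these factors below by \<open>C k^(1-\<mu>)\<close>, which is
  comparable to \<open>m^(1-\<mu>)\<close> for \<open>m + 2 \<le> k \<le> m + 4\<close>; and \<open>|z^2 + z^-2| = 2 |cos (2\<pi>\<beta>)|\<close>
  is a nonzero constant because \<open>\<beta>\<close> is not a multiple of \<open>1/4\<close>.\<close>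

definition power_row :: "nat \<Rightarrow> 'a::comm_ring_1 \<Rightarrow> 'a ^ 4" where
  "power_row m x = vector [1, x, x ^ (m + 3), x ^ (m + 4)]"

lemma vector_4 [simp]:
  "(vector [x, y, z, w] :: 'a::zero ^ 4) $ 1 = x"
  "(vector [x, y, z, w] :: 'a::zero ^ 4) $ 2 = y"
  "(vector [x, y, z, w] :: 'a::zero ^ 4) $ 3 = z"
  "(vector [x, y, z, w] :: 'a::zero ^ 4) $ 4 = w"
  unfolding vector_def by simp_all

lemma det_4:
  "det (A::'a::comm_ring_1^4^4) =
  A$1$1*A$2$2*A$3$3*A$4$4 - A$1$1*A$2$2*A$3$4*A$4$3 - A$1$1*A$2$3*A$3$2*A$4$4
 + A$1$1*A$2$3*A$3$4*A$4$2 + A$1$1*A$2$4*A$3$2*A$4$3 - A$1$1*A$2$4*A$3$3*A$4$2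
 - A$1$2*A$2$1*A$3$3*A$4$4 + A$1$2*A$2$1*A$3$4*A$4$3 + A$1$2*A$2$3*A$3$1*A$4$4
 - A$1$2*A$2$3*A$3$4*A$4$1 - A$1$2*A$2$4*A$3$1*A$4$3 + A$1$2*A$2$4*A$3$3*A$4$1
 + A$1$3*A$2$1*A$3$2*A$4$4 - A$1$3*A$2$1*A$3$4*A$4$2 - A$1$3*A$2$2*A$3$1*A$4$4
 + A$1$3*A$2$2*A$3$4*A$4$1 + A$1$3*A$2$4*A$3$1*A$4$2 - A$1$3*A$2$4*A$3$2*A$4$1
 - A$1$4*A$2$1*A$3$2*A$4$3 + A$1$4*A$2$1*A$3$3*A$4$2 + A$1$4*A$2$2*A$3$1*A$4$3
 - A$1$4*A$2$2*A$3$3*A$4$1 - A$1$4*A$2$3*A$3$1*A$4$2 + A$1$4*A$2$3*A$3$2*A$4$1"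
proof -
  have f1: "finite {2::4, 3, 4}" "1 \<notin> {2::4, 3, 4}" by auto
  have f2: "finite {3::4, 4}" "2 \<notin> {3::4, 4}" by auto
  have f3: "finite {4::4}" "3 \<notin> {4::4}" by auto
  show ?thesis
    unfolding det_def UNIV_4
    unfolding sum_over_permutations_insert[OF f1]
    unfolding sum_over_permutations_insert[OF f2]
    unfolding sum_over_permutations_insert[OF f3]
    unfolding permutes_sing
    by (simp add: sign_swap_id permutation_swap_id permutation_compose sign_compose sign_id
        swap_id_eq algebra_simps)
qed

lemma det_4_first_row_ones:
  fixes a b c :: "'a::comm_ring_1 ^ 4"
  shows "det (vector [vector [1, 1, 1, 1], a, b, c]) =
    det (vector [vector [a$2 - a$1, a$3 - a$1, a$4 - a$1], vector [b$2 - b$1, b$3 - b$1, b$4 - b$1],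
                 vector [c$2 - c$1, c$3 - c$1, c$4 - c$1]] :: 'a ^ 3 ^ 3)"
  unfolding det_4 det_3 by (simp add: algebra_simps)

lemma det_power_rows:
  fixes z :: "'a::field"
  assumes "z \<noteq> 0"
  defines "u \<equiv> inverse z"
  shows "det (vector [vector [1, 1, 1, 1], power_row m (-1), power_row m (z\<^sup>2), power_row m (-(u\<^sup>2))])
    = (if even m then 4 * (z ^ (m + 4) - u ^ (m + 4)) * (z ^ (m + 2) - u ^ (m + 2))
       else - 2 * (z\<^sup>2 + u\<^sup>2) * (z ^ (m + 3) - u ^ (m + 3))\<^sup>2)"
    (is "det ?M = _")
proof -
  define p where "p = z ^ (m + 3)"
  define q where "q = u ^ (m + 3)"
  define s :: 'a where "s = (-1) ^ (m + 3)"
  have zu: "z * u = 1" using assms by (simp add: u_def)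
  have "p \<noteq> 0" using assms by (simp add: p_def)
  have q: "q = inverse p" by (simp add: p_def q_def u_def power_inverse)
  have power_m3: "x ^ (m + 3) = x ^ (m + 2) * x" for x :: 'a
    by (simp add: eval_nat_numeral mult_ac)
  have power_m4: "x ^ (m + 4) = x ^ (m + 3) * x" for x :: 'a
    by (simp add: eval_nat_numeral mult_ac)
  have z2_power: "(z\<^sup>2) ^ (m + 3) = p\<^sup>2" unfolding p_def by (metis power_mult mult.commute)
  have u2_power: "(-(u\<^sup>2)) ^ (m + 3) = s * q\<^sup>2"
    unfolding q_def s_def by (metis power_minus power_mult mult.commute)
  have M: "?M = vector [vector [1, 1, 1, 1], vector [1, -1, s, -s], vector [1, z\<^sup>2, p\<^sup>2, p\<^sup>2 * z\<^sup>2],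
      vector [1, -(u\<^sup>2), s * q\<^sup>2, - s * q\<^sup>2 * u\<^sup>2]]"
    unfolding power_row_def by (simp add: power_m4 z2_power u2_power s_def)
  have "det ?M = 4 * (p * z - q * u) * (p * u - q * z)" if "even m"
  proof -
    have s: "s = -1" using that by (simp add: s_def)
    show ?thesis unfolding M det_4_first_row_ones det_3 vector_3 vector_4 s
      using \<open>p \<noteq> 0\<close> \<open>z \<noteq> 0\<close> by (simp add: q u_def field_simps) algebra
  qed
  moreover have "det ?M = - 2 * (z\<^sup>2 + u\<^sup>2) * (p - q)\<^sup>2" if "odd m"
  proof -
    have s: "s = 1" using that by (simp add: s_def)
    show ?thesis unfolding M det_4_first_row_ones det_3 vector_3 vector_4 s
      using \<open>p \<noteq> 0\<close> \<open>z \<noteq> 0\<close> by (simp add: q u_def field_simps) algebra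
  qed
  moreover have "p * z = z ^ (m + 4)" "q * u = u ^ (m + 4)"
    by (simp_all add: p_def q_def power_m4)
  moreover have "p * u = z ^ (m + 2)" "q * z = u ^ (m + 2)"
    using zu by (simp_all add: p_def q_def power_m3 mult_ac)
  ultimately show ?thesis by (simp add: p_def q_def)
qed

lemma Aop_0: "Aop 0 = -1"
  by (simp add: Aop_def)

lemma Aop_inverse:
  assumes "t \<noteq> 0"
  shows "Aop (1 / t) = - inverse (Aop t)"
proof -
  have "complex_of_real t + \<i> \<noteq> 0" "complex_of_real t - \<i> \<noteq> 0" "complex_of_real t \<noteq> 0"
    using assms by (auto simp: complex_eq_iff)
  moreover have "inverse (complex_of_real t) - \<i> \<noteq> 0"
    by (auto simp: complex_eq_iff)
  ultimately show ?thesis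
    by (simp add: Aop_def of_real_inverse [symmetric] field_simps)
qed

lemma M2_0_inverse_eq:
  assumes "t \<noteq> 0" and "Aop t = z\<^sup>2"
  shows "M2 m 0 t (1 / t) =
    vector [vector [1, 1, 1, 1], power_row m (-1), power_row m (z\<^sup>2), power_row m (-(inverse z)\<^sup>2)]"
  using assms by (simp add: M2_def rowM_def power_row_def Aop_0 Aop_inverse power_inverse)

lemma norm_cis_power_diff: "cmod (cis y ^ k - inverse (cis y) ^ k) = 2 * \<bar>sin (real k * y)\<bar>"
proof -
  have "cis y ^ k - inverse (cis y) ^ k = 2 * \<i> * complex_of_real (sin (real k * y))"
    by (simp add: Complex.DeMoivre complex_eq_iff)
  then show ?thesis
    by (simp add: norm_mult)
qed

lemma norm_cis_power2_add: "cmod (cis y ^ 2 + inverse (cis y) ^ 2) = 2 * \<bar>cos (2 * y)\<bar>"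
proof -
  have "cis y ^ 2 + inverse (cis y) ^ 2 = 2 * complex_of_real (cos (2 * y))"
    by (simp add: Complex.DeMoivre complex_eq_iff)
  then show ?thesis
    by (simp add: norm_mult)
qed

lemma abs_sin_ge_half_abs:
  fixes y :: real
  assumes "\<bar>y\<bar> \<le> pi / 2"
  shows "\<bar>y\<bar> / 2 \<le> \<bar>sin y\<bar>"
proof -
  have "(\<Sum>m<3. sin_coeff m * y ^ m) = y"
    by (simp add: numeral_3_eq_3 sin_coeff_def)
  moreover have "(fact 3 :: real) = 6"
    by (simp add: numeral_3_eq_3)
  ultimately have taylor: "\<bar>sin y - y\<bar> \<le> inverse 6 * \<bar>y\<bar> ^ 3"
    using Maclaurin_sin_bound [of y 3] by simp
  have "\<bar>y\<bar>\<^sup>2 \<le> (pi / 2)\<^sup>2"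
    using assms by (intro power_mono) auto
  also have "\<dots> \<le> 3"
  proof -
    have "pi \<le> 3.2"
      using pi_approx by simp
    then have "pi * pi \<le> 3.2 * 3.2"
      using pi_gt_zero by (intro mult_mono) auto
    then show ?thesis
      by (simp add: power2_eq_square)
  qed
  finally have "\<bar>y\<bar> ^ 3 \<le> 3 * \<bar>y\<bar>"
    by (simp add: power3_eq_cube power2_eq_square mult.commute mult_left_mono)
  then have "inverse 6 * \<bar>y\<bar> ^ 3 \<le> \<bar>y\<bar> / 2"
    by simp
  with taylor show ?thesis
    by linarith
qed

lemma abs_sub_round_le_abs_sin_pi:
  fixes x :: real
  shows "\<bar>x - of_int (round x)\<bar> \<le> \<bar>sin (pi * x)\<bar>"
proof -
  define y where "y = x - of_int (round x)"
  have "\<bar>y\<bar> \<le> 1 / 2"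
    unfolding y_def using of_int_round_abs_le [of x] by linarith
  then have "\<bar>pi * y\<bar> / 2 \<le> \<bar>sin (pi * y)\<bar>"
    by (intro abs_sin_ge_half_abs) (simp add: abs_mult)
  moreover have "2 * \<bar>y\<bar> \<le> \<bar>pi * y\<bar>"
    using mult_right_mono [OF pi_ge_two, of "\<bar>y\<bar>"] by (simp add: abs_mult)
  moreover have "\<bar>sin (pi * x)\<bar> = \<bar>sin (pi * y)\<bar>"
  proof -
    have "sin (pi * x) = sin (pi * y + pi * of_int (round x))"
      by (simp add: y_def algebra_simps)
    also have "\<dots> = sin (pi * y) * cos (pi * of_int (round x))"
      by (simp add: sin_add)
    finally show ?thesis
      by (simp add: abs_mult)
  qed
  ultimately have "\<bar>y\<bar> \<le> \<bar>sin (pi * x)\<bar>"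
    by linarith
  then show ?thesis
    by (simp add: y_def)
qed

lemma badly_approximable_abs_sin:
  fixes \<beta> \<mu> C :: real and k :: nat
  assumes "\<forall>n m :: int. m \<noteq> 0 \<longrightarrow> \<bar>\<beta> - real_of_int n / real_of_int m\<bar> \<ge> C / (\<bar>real_of_int m\<bar> powr \<mu>)"
    and "k \<ge> 1"
  shows "C * real k powr (1 - \<mu>) \<le> \<bar>sin (real k * (pi * \<beta>))\<bar>"
proof -
  define n where "n = round (real k * \<beta>)"
  have "C / real k powr \<mu> \<le> \<bar>\<beta> - of_int n / real k\<bar>"
    using assms(1) [rule_format, of "int k" n] assms(2) by simp
  then have "real k * (C / real k powr \<mu>) \<le> real k * \<bar>\<beta> - of_int n / real k\<bar>"
    by (intro mult_left_mono) auto
  also have "real k * \<bar>\<beta> - of_int n / real k\<bar> = \<bar>real k * \<beta> - of_int n\<bar>"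
  proof -
    have "real k * (\<beta> - of_int n / real k) = real k * \<beta> - of_int n"
      using assms(2) by (simp add: field_simps)
    then show ?thesis
      by (metis abs_mult abs_of_nat)
  qed
  also have "\<dots> \<le> \<bar>sin (pi * (real k * \<beta>))\<bar>"
    unfolding n_def by (rule abs_sub_round_le_abs_sin_pi)
  finally show ?thesis
    using assms(2) by (simp add: powr_diff mult_ac)
qed

lemma badly_approximable_cos_nonzero:
  fixes \<beta> \<mu> C :: real
  assumes "\<forall>n m :: int. m \<noteq> 0 \<longrightarrow> \<bar>\<beta> - real_of_int n / real_of_int m\<bar> \<ge> C / (\<bar>real_of_int m\<bar> powr \<mu>)"
    and "C > 0"
  shows "cos (2 * (pi * \<beta>)) \<noteq> 0"
proof
  assume "cos (2 * (pi * \<beta>)) = 0"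
  then obtain i :: int where "2 * (pi * \<beta>) = of_int i * (pi / 2)"
    using cos_zero_iff_int by blast
  then have "\<bar>\<beta> - of_int i / 4\<bar> = 0"
    by (simp add: field_simps)
  moreover have "C / 4 powr \<mu> \<le> \<bar>\<beta> - of_int i / 4\<bar>"
    using assms(1) [rule_format, of 4 i] by simp
  moreover have "C / 4 powr \<mu> > 0"
    using assms(2) by simp
  ultimately show False
    by linarith
qed

lemma powr_ge_min_scaled:
  fixes x y c e :: real
  assumes "0 < x" "x \<le> y" "y \<le> c * x"
  shows "min 1 (c powr e) * x powr e \<le> y powr e"
proof (cases "e \<ge> 0")
  case True
  then have "x powr e \<le> y powr e"
    using assms by (intro powr_mono2) auto
  moreover have "min 1 (c powr e) * x powr e \<le> x powr e"
    by (simp add: mult_left_le_one_le min_le_iff_disj)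
  ultimately show ?thesis
    by linarith
next
  case False
  have "0 < c * x"
    using assms by linarith
  then have "c > 0"
    using assms(1) by (simp add: zero_less_mult_iff)
  then have "(c * x) powr e \<le> y powr e"
    using assms False by (intro powr_mono2') auto
  moreover have "min 1 (c powr e) * x powr e \<le> (c * x) powr e"
    using \<open>c > 0\<close> assms(1) by (simp add: powr_mult mult_right_mono)
  ultimately show ?thesis
    by linarith
qed

lemma badly_approximable_abs_sin_uniform:
  fixes \<beta> \<mu> C :: real and m k :: nat
  assumes "\<forall>n m :: int. m \<noteq> 0 \<longrightarrow> \<bar>\<beta> - real_of_int n / real_of_int m\<bar> \<ge> C / (\<bar>real_of_int m\<bar> powr \<mu>)"
    and "C \<ge> 0" and "1 \<le> m" and "m \<le> k" and "k \<le> 5 * m"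
  shows "C * min 1 (5 powr (1 - \<mu>)) * real m powr (1 - \<mu>) \<le> \<bar>sin (real k * (pi * \<beta>))\<bar>"
proof -
  have "C * min 1 (5 powr (1 - \<mu>)) * real m powr (1 - \<mu>) \<le> C * real k powr (1 - \<mu>)"
    using powr_ge_min_scaled [of "real m" "real k" 5 "1 - \<mu>"] assms(2-5)
    by (simp add: mult.assoc mult_left_mono)
  also have "\<dots> \<le> \<bar>sin (real k * (pi * \<beta>))\<bar>"
    using badly_approximable_abs_sin [OF assms(1)] assms(3,4) by simp
  finally show ?thesis .
qed

lemma norm_det_power_rows_ge:
  fixes y L :: real
  defines "z \<equiv> cis y"
  assumes "0 \<le> L" and sin_ge: "\<And>k. m + 2 \<le> k \<Longrightarrow> k \<le> m + 4 \<Longrightarrow> L \<le> \<bar>sin (real k * y)\<bar>"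
  shows "16 * min 1 \<bar>cos (2 * y)\<bar> * L\<^sup>2 \<le>
    cmod (det (vector [vector [1, 1, 1, 1], power_row m (-1), power_row m (z\<^sup>2), power_row m (-(inverse z)\<^sup>2)]))"
    (is "_ \<le> cmod (det ?M)")
proof -
  have "z \<noteq> 0"
    by (simp add: z_def)
  have norm_diff: "cmod (z ^ k - inverse z ^ k) = 2 * \<bar>sin (real k * y)\<bar>" for k
    unfolding z_def by (rule norm_cis_power_diff)
  have norm_add: "cmod (z\<^sup>2 + (inverse z)\<^sup>2) = 2 * \<bar>cos (2 * y)\<bar>"
    unfolding z_def by (rule norm_cis_power2_add)
  show ?thesis
  proof (cases "even m")
    case True
    have "min 1 \<bar>cos (2 * y)\<bar> * L\<^sup>2 \<le> L * L"
      by (simp add: power2_eq_square mult_left_le_one_le)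
    also have "\<dots> \<le> \<bar>sin (real (m + 4) * y)\<bar> * \<bar>sin (real (m + 2) * y)\<bar>"
      using \<open>0 \<le> L\<close> sin_ge [of "m + 4"] sin_ge [of "m + 2"] by (intro mult_mono) auto
    finally have "16 * min 1 \<bar>cos (2 * y)\<bar> * L\<^sup>2 \<le> 16 * (\<bar>sin (real (m + 4) * y)\<bar> * \<bar>sin (real (m + 2) * y)\<bar>)"
      by simp
    also have "\<dots> = cmod (det ?M)"
      using True by (simp only: det_power_rows [OF \<open>z \<noteq> 0\<close>] if_True norm_mult norm_diff) simp
    finally show ?thesis .
  next
    case False
    have "L \<le> \<bar>sin (real (m + 3) * y)\<bar>"
      using sin_ge [of "m + 3"] by simp
    then have "min 1 \<bar>cos (2 * y)\<bar> * L\<^sup>2 \<le> \<bar>cos (2 * y)\<bar> * \<bar>sin (real (m + 3) * y)\<bar>\<^sup>2"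
      using \<open>0 \<le> L\<close> by (intro mult_mono power_mono) simp_all
    then have "16 * min 1 \<bar>cos (2 * y)\<bar> * L\<^sup>2 \<le> 16 * (\<bar>cos (2 * y)\<bar> * \<bar>sin (real (m + 3) * y)\<bar>\<^sup>2)"
      by simp
    also have "\<dots> = cmod (det ?M)"
      using False by (simp only: det_power_rows [OF \<open>z \<noteq> 0\<close>] if_False norm_mult norm_power norm_diff norm_add) simp
    finally show ?thesis .
  qed
qed

theorem proposition6p2:
  fixes t \<beta> \<mu> C :: real
  assumes "t > 0"
    and "0 < \<beta>" and "\<beta> < 1"
    and "(complex_of_real t + \<i>) / (complex_of_real t - \<i>) = exp (2 * pi * \<i> * complex_of_real \<beta>)"
    and "C > 0"
    and "\<forall>n m :: int. m \<noteq> 0 \<longrightarrow> \<bar>\<beta> - real_of_int n / real_of_int m\<bar> \<ge> C / (\<bar>real_of_int m\<bar> powr \<mu>)"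
  shows "\<exists>D > 0. \<forall>m :: nat. m \<ge> 1 \<longrightarrow> cmod (det (M2 m 0 t (1 / t))) \<ge> D / (real m powr (2 * \<mu> - 2))"
proof -
  define y where "y = pi * \<beta>"
  define z where "z = cis y"
  define c where "c = C * min 1 (5 powr (1 - \<mu>))"
  define D where "D = 16 * min 1 \<bar>cos (2 * y)\<bar> * c\<^sup>2"
  have "z\<^sup>2 = cis (2 * pi * \<beta>)"
    by (simp add: z_def y_def Complex.DeMoivre mult_ac)
  then have Aop_t: "Aop t = z\<^sup>2"
    using assms(4) by (simp add: Aop_def cis_conv_exp mult_ac)
  have "t \<noteq> 0"
    using assms(1) by simp
  have "c > 0"
    using assms(5) by (simp add: c_def)
  then have "D > 0"
    using badly_approximable_cos_nonzero [OF assms(6,5)] by (simp add: D_def y_def)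
  show ?thesis
  proof (intro exI conjI allI impI)
    fix m :: nat
    assume "m \<ge> 1"
    have "(real m powr (1 - \<mu>))\<^sup>2 = inverse (real m powr (2 * \<mu> - 2))"
      by (simp add: power2_eq_square flip: powr_add powr_minus)
    then have "D / real m powr (2 * \<mu> - 2) = 16 * min 1 \<bar>cos (2 * y)\<bar> * (c * real m powr (1 - \<mu>))\<^sup>2"
      by (simp add: D_def power_mult_distrib divide_inverse)
    also have "\<dots> \<le> cmod (det (M2 m 0 t (1 / t)))"
      unfolding M2_0_inverse_eq [OF \<open>t \<noteq> 0\<close> Aop_t] z_def c_def y_def
      using \<open>m \<ge> 1\<close> \<open>c > 0\<close> assms(5) badly_approximable_abs_sin_uniform [OF assms(6)]
      by (intro norm_det_power_rows_ge) (auto simp: c_def)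
    finally show "D / real m powr (2 * \<mu> - 2) \<le> cmod (det (M2 m 0 t (1 / t)))" .
  qed (rule \<open>D > 0\<close>)
qed

end
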